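(* Let $\mathcal P\subset\nabla$ be a family of parameters. Suppose that for every $k\ge0$ the maximum $\max\{f(k;\lambda,\boldsymbol p):(\lambda,\boldsymbol p)\in\mathcal P\}$ is attained, and is attained (only) on $\mathcal P\cap\mathcal M_k$, where $\mathcal M_k=\{(\lambda,\boldsymbol p)\in\nabla:\lambda+\sum_ip_i=k\}$. Then the family $\mathcal P$ is cross modal.
   Context: $\nabla=\{(\lambda,\boldsymbol p):\lambda\ge0,\ 1\ge p_1\ge p_2\ge\dots\ge0,\ \sum_ip_i<\infty\}$. For $(\lambda,\boldsymbol p)\in\nabla$, $f(k;\lambda,\boldsymbol p)$ is the probability that $X+\sum_iB_i=k$ where $X\sim\mathrm{Poisson}(\lambda)$, $B_i\sim\mathrm{Bernoulli}(p_i)$ are independent. A mode of $f(\cdot;\lambda,\boldsymbol p)$ is any $k$ at which it attains its maximum. The family $\mathcal P$ is cross modal if for every $k\ge0$ the likelihood $(\lambda,\boldsymbol p)\mapsto f(k;\lambda,\boldsymbol p)$ attains its maximum over $\mathcal P$, and for every maximiser $(\lambda,\boldsymbol p)$, $k$ is a mode of $f(\cdot;\lambda,\boldsymbol p)$. *)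

theory Defs
  imports "HOL-Analysis.Analysis"
begin

text \<open>A parameter is a pair (lambda, p) with p :: nat => real the Bernoulli sequence
  p_0 >= p_1 >= ... (0-indexed).\<close>

definition nabla :: "(real \<times> (nat \<Rightarrow> real)) set" where
  "nabla = {(lam, p). lam \<ge> 0 \<and> (\<forall>i. 0 \<le> p i \<and> p i \<le> 1) \<and> decseq p \<and> summable p}"

text \<open>Probability that X + B_0 + ... + B_(n-1) = k, where X ~ Poisson(lam) and
  B_i ~ Bernoulli(p i) are independent: sum over the set S of indices i < n with B_i = 1.\<close>

definition f_trunc :: "nat \<Rightarrow> nat \<Rightarrow> real \<Rightarrow> (nat \<Rightarrow> real) \<Rightarrow> real" where
  "f_trunc n k lam p =
     (\<Sum>S\<in>{S. S \<subseteq> {..<n} \<and> card S \<le> k}.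
        (\<Prod>i\<in>S. p i) * (\<Prod>i\<in>{..<n} - S. 1 - p i) *
        (lam ^ (k - card S) / fact (k - card S) * exp (- lam)))"

text \<open>f(k; lam, p) = P(X + sum_i B_i = k), the distribution of the (a.s. finite) infinite
  sum being the limit of the distributions of the partial sums.\<close>

definition f :: "nat \<Rightarrow> real \<Rightarrow> (nat \<Rightarrow> real) \<Rightarrow> real" where
  "f k lam p = lim (\<lambda>n. f_trunc n k lam p)"

definition is_mode :: "nat \<Rightarrow> real \<Rightarrow> (nat \<Rightarrow> real) \<Rightarrow> bool" where
  "is_mode k lam p \<longleftrightarrow> (\<forall>j. f j lam p \<le> f k lam p)"

definition is_maximiser :: "(real \<times> (nat \<Rightarrow> real)) set \<Rightarrow> nat \<Rightarrow> real \<times> (nat \<Rightarrow> real) \<Rightarrow> bool" where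
  "is_maximiser P k \<theta> \<longleftrightarrow> \<theta> \<in> P \<and> (\<forall>\<theta>'\<in>P. f k (fst \<theta>') (snd \<theta>') \<le> f k (fst \<theta>) (snd \<theta>))"

definition cross_modal :: "(real \<times> (nat \<Rightarrow> real)) set \<Rightarrow> bool" where
  "cross_modal P \<longleftrightarrow>
     (\<forall>k. (\<exists>\<theta>. is_maximiser P k \<theta>) \<and>
          (\<forall>\<theta>. is_maximiser P k \<theta> \<longrightarrow> is_mode k (fst \<theta>) (snd \<theta>)))"

definition M :: "nat \<Rightarrow> (real \<times> (nat \<Rightarrow> real)) set" where
  "M k = {(lam, p). (lam, p) \<in> nabla \<and> lam + (\<Sum>i. p i) = real k}"

end

(* Every maximiser (lam, p) lies in M k, so the mean lam + sum_i p_i of f(.; lam, p) is the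
   integer k, and it suffices to show that k is then a mode.

   For a finite sum of independent Bernoulli variables this is Darroch's theorem: if the mean mu
   is an integer, the law D increases up to mu and decreases from mu on.  Both halves follow by
   induction on the number of summands from the two size-bias identities
     (j + 1) D(j + 1) = sum_i p_i D_i(j)    and    sum_i (1 - p_i) D_i(j) = (n - j) D(j),
   where D_i is the law with summand i removed.

   The law of X + sum_i B_i with integer mean k is the limit of such finite laws with mean exactly
   k: keep p_0, ..., p_(n-1), merge the tail into one Bernoulli variable with parameter
   sum_(i >= n) p_i, and replace Poisson(lam) by Binomial(n, lam/n).  The inequalities
   f(j) <= f(k) pass to the limit. *)

theory Submission
  imports Defs "HOL-Computational_Algebra.Polynomial"
begin

(* The law of the sum of independent Bernoulli(p i), i in I, read off its generating function. *)
definition poisson_binomial :: "(nat \<Rightarrow> real) \<Rightarrow> nat set \<Rightarrow> nat \<Rightarrow> real" where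
  "poisson_binomial p I j = coeff (\<Prod>i\<in>I. [:1 - p i, p i:]) j"

lemma poisson_binomial_empty [simp]: "poisson_binomial p {} j = (if j = 0 then 1 else 0)"
  by (simp add: poisson_binomial_def)

lemma poisson_binomial_insert_0:
  assumes "finite I" "a \<notin> I"
  shows "poisson_binomial p (insert a I) 0 = (1 - p a) * poisson_binomial p I 0"
  using assms by (simp add: poisson_binomial_def)

lemma poisson_binomial_insert_Suc:
  assumes "finite I" "a \<notin> I"
  shows "poisson_binomial p (insert a I) (Suc j)
           = (1 - p a) * poisson_binomial p I (Suc j) + p a * poisson_binomial p I j"
  using assms by (simp add: poisson_binomial_def)

lemma poisson_binomial_cong:
  assumes "\<And>i. i \<in> I \<Longrightarrow> p i = q i"
  shows "poisson_binomial p I j = poisson_binomial q I j"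
  unfolding poisson_binomial_def using assms by (metis (no_types, lifting) prod.cong)

lemma poisson_binomial_eq_0:
  assumes "finite I" "card I < j"
  shows "poisson_binomial p I j = 0"
proof -
  have deg1: "degree [:1 - p i, p i:] \<le> 1" for i
    by (metis One_nat_def degree_pCons_0 degree_pCons_le)
  have "degree (\<Prod>i\<in>I. [:1 - p i, p i:]) \<le> (\<Sum>i\<in>I. degree [:1 - p i, p i:])"
    using degree_prod_sum_le[OF assms(1)] unfolding o_def .
  also have "\<dots> \<le> card I"
    using sum_mono[of I "\<lambda>i. degree [:1 - p i, p i:]" "\<lambda>_. 1"] deg1
    by (simp del: degree_pCons_eq_if)
  finally have "degree (\<Prod>i\<in>I. [:1 - p i, p i:]) \<le> card I" .
  then show ?thesis
    using assms(2) by (simp add: poisson_binomial_def coeff_eq_0)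
qed

lemma poisson_binomial_union:
  assumes "finite I" "finite J" "I \<inter> J = {}"
  shows "poisson_binomial p (I \<union> J) j
           = (\<Sum>m\<le>j. poisson_binomial p I m * poisson_binomial p J (j - m))"
  using assms by (simp add: poisson_binomial_def prod.union_disjoint coeff_mult)

lemma poisson_binomial_success_identity:
  assumes "finite I"
  shows "real (Suc j) * poisson_binomial p I (Suc j)
           = (\<Sum>i\<in>I. p i * poisson_binomial p (I - {i}) j)"
proof -
  have "real (Suc j) * poisson_binomial p I (Suc j)
      = coeff (pderiv (\<Prod>i\<in>I. [:1 - p i, p i:])) j"
    by (simp add: poisson_binomial_def coeff_pderiv)
  also have "\<dots> = (\<Sum>i\<in>I. p i * poisson_binomial p (I - {i}) j)"
    by (simp add: pderiv_prod coeff_sum poisson_binomial_def pderiv_pCons mult.commute)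
  finally show ?thesis .
qed

lemma prod_monom_1: "finite X \<Longrightarrow> (\<Prod>i\<in>X. monom (a i) 1) = monom (\<Prod>i\<in>X. a i) (card X)"
  by (induction X rule: finite_induct) (simp_all add: mult_monom)

lemma poisson_binomial_eq_subset_sum:
  assumes "finite I"
  shows "poisson_binomial p I j
           = (\<Sum>S | S \<subseteq> I \<and> card S = j. (\<Prod>i\<in>S. p i) * (\<Prod>i\<in>I - S. 1 - p i))"
proof -
  have "(\<Prod>i\<in>I. [:1 - p i, p i:]) = (\<Prod>i\<in>I. monom (p i) 1 + [:1 - p i:])"
    by (simp add: monom_Suc monom_0)
  also have "\<dots> = (\<Sum>S\<in>Pow I. (\<Prod>i\<in>S. monom (p i) 1) * (\<Prod>i\<in>I - S. [:1 - p i:]))"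
    by (rule prod_add[OF assms])
  also have "\<dots> = (\<Sum>S\<in>Pow I. monom (\<Prod>i\<in>S. p i) (card S) * [:\<Prod>i\<in>I - S. 1 - p i:])"
    using assms
    by (intro sum.cong refl, subst prod_monom_1) (auto simp: prod_to_poly intro: finite_subset)
  finally have "poisson_binomial p I j
      = (\<Sum>S\<in>Pow I. if card S = j then (\<Prod>i\<in>S. p i) * (\<Prod>i\<in>I - S. 1 - p i) else 0)"
    by (simp add: poisson_binomial_def coeff_sum mult.commute if_distrib cong: if_cong)
  also have "\<dots> = (\<Sum>S | S \<subseteq> I \<and> card S = j. (\<Prod>i\<in>S. p i) * (\<Prod>i\<in>I - S. 1 - p i))"
    using assms by (simp flip: sum.inter_filter add: Pow_def)
  finally show ?thesis .
qed

lemma poisson_binomial_nonneg: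
  assumes "\<And>i. i \<in> I \<Longrightarrow> 0 \<le> p i \<and> p i \<le> 1"
  shows "0 \<le> poisson_binomial p I j"
proof (cases "finite I")
  case True
  with assms show ?thesis
    by (auto simp: poisson_binomial_eq_subset_sum intro!: sum_nonneg mult_nonneg_nonneg prod_nonneg)
qed (simp add: poisson_binomial_def)

lemma poisson_binomial_le_1:
  assumes "finite I" "\<And>i. i \<in> I \<Longrightarrow> 0 \<le> p i \<and> p i \<le> 1"
  shows "poisson_binomial p I j \<le> 1"
  using assms
proof (induction I arbitrary: j rule: finite_induct)
  case (insert a I)
  have pa: "0 \<le> p a" "p a \<le> 1"
    and D: "\<And>j. 0 \<le> poisson_binomial p I j \<and> poisson_binomial p I j \<le> 1"
    using insert poisson_binomial_nonneg by auto
  show ?case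
  proof (cases j)
    case 0
    then show ?thesis
      using pa D by (simp add: poisson_binomial_insert_0 insert.hyps mult_le_one)
  next
    case (Suc j')
    have "(1 - p a) * poisson_binomial p I j + p a * poisson_binomial p I j'
        \<le> (1 - p a) * 1 + p a * 1"
      using pa D by (intro add_mono mult_left_mono) auto
    then show ?thesis
      using Suc by (simp add: poisson_binomial_insert_Suc insert.hyps)
  qed
qed simp

lemma poisson_binomial_remove:
  assumes "finite I" "i \<in> I"
  shows "poisson_binomial p I 0 = (1 - p i) * poisson_binomial p (I - {i}) 0"
    and "poisson_binomial p I (Suc j)
           = (1 - p i) * poisson_binomial p (I - {i}) (Suc j)
             + p i * poisson_binomial p (I - {i}) j"
  using assms poisson_binomial_insert_0[of "I - {i}" i p]
    poisson_binomial_insert_Suc[of "I - {i}" i p j]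
  by (simp_all add: insert_absorb)

lemma poisson_binomial_failure_identity:
  assumes "finite I"
  shows "(\<Sum>i\<in>I. (1 - p i) * poisson_binomial p (I - {i}) j)
           = (real (card I) - real j) * poisson_binomial p I j"
proof (cases j)
  case 0
  then show ?thesis
    using assms by (simp add: poisson_binomial_remove(1)[symmetric])
next
  case (Suc j')
  have "(\<Sum>i\<in>I. (1 - p i) * poisson_binomial p (I - {i}) j)
      = (\<Sum>i\<in>I. poisson_binomial p I j - p i * poisson_binomial p (I - {i}) j')"
    using assms Suc by (intro sum.cong refl) (simp add: poisson_binomial_remove(2))
  also have "\<dots> = real (card I) * poisson_binomial p I j - real j * poisson_binomial p I j"
    unfolding Suc by (simp add: sum_subtractf flip: poisson_binomial_success_identity[OF assms])
  finally show ?thesis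
    by (simp add: algebra_simps)
qed

lemma poisson_binomial_Suc_le_max:
  assumes "finite I" "i \<in> I" "0 \<le> p i" "p i \<le> 1"
  shows "poisson_binomial p I (Suc j)
           \<le> max (poisson_binomial p (I - {i}) j) (poisson_binomial p (I - {i}) (Suc j))"
  using assms convex_bound_le[of "poisson_binomial p (I - {i}) (Suc j)" _
      "poisson_binomial p (I - {i}) j" "1 - p i" "p i"]
  by (simp add: poisson_binomial_remove(2))

lemma poisson_binomial_mono_below_mean:
  assumes "finite I" "\<And>i. i \<in> I \<Longrightarrow> 0 \<le> p i \<and> p i \<le> 1" "real (Suc j) \<le> (\<Sum>i\<in>I. p i)"
  shows "poisson_binomial p I j \<le> poisson_binomial p I (Suc j)"
  using assms
proof (induction I arbitrary: j rule: finite_psubset_induct)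
  case (psubset I)
  let ?D = "poisson_binomial p"
  have remove_le: "?D I j \<le> ?D (I - {i}) j" if i: "i \<in> I" for i
  proof (cases j)
    case 0
    then show ?thesis
      using psubset.prems(1)[OF i] poisson_binomial_nonneg[of "I - {i}" p 0] psubset.prems(1)
      by (simp add: poisson_binomial_remove(1)[OF psubset.hyps(1) i] mult_left_le_one_le)
  next
    case (Suc j')
    have "real (Suc j') \<le> (\<Sum>k\<in>I - {i}. p k)"
      using psubset.prems(1)[OF i] psubset.prems(2) Suc i psubset.hyps(1) by (simp add: sum_diff1)
    then have "?D (I - {i}) j' \<le> ?D (I - {i}) j"
      using psubset i unfolding Suc by (intro psubset.IH) auto
    then show ?thesis
      using Suc poisson_binomial_Suc_le_max[OF psubset.hyps(1) i, of p j'] psubset.prems(1)[OF i]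
      by simp
  qed
  have "real (Suc j) * ?D I j \<le> (\<Sum>i\<in>I. p i) * ?D I j"
    using psubset.prems by (intro mult_right_mono poisson_binomial_nonneg) auto
  also have "\<dots> = (\<Sum>i\<in>I. p i * ?D I j)"
    by (simp add: sum_distrib_right)
  also have "\<dots> \<le> (\<Sum>i\<in>I. p i * ?D (I - {i}) j)"
    using psubset.prems(1) remove_le by (intro sum_mono mult_left_mono) auto
  also have "\<dots> = real (Suc j) * ?D I (Suc j)"
    by (rule poisson_binomial_success_identity[OF psubset.hyps(1), symmetric])
  finally have "real (Suc j) * ?D I j \<le> real (Suc j) * ?D I (Suc j)" .
  then show ?case
    by simp
qed

lemma poisson_binomial_antimono_above_mean:
  assumes "finite I" "\<And>i. i \<in> I \<Longrightarrow> 0 \<le> p i \<and> p i \<le> 1" "(\<Sum>i\<in>I. p i) \<le> real j"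
  shows "poisson_binomial p I (Suc j) \<le> poisson_binomial p I j"
  using assms
proof (induction I arbitrary: j rule: finite_psubset_induct)
  case (psubset I)
  let ?D = "poisson_binomial p"
  show ?case
  proof (cases "j < card I")
    case False
    then show ?thesis
      using psubset poisson_binomial_nonneg[of I p j] by (simp add: poisson_binomial_eq_0)
  next
    case True
    have remove_le: "?D I (Suc j) \<le> ?D (I - {i}) j" if i: "i \<in> I" for i
    proof -
      have "(\<Sum>k\<in>I - {i}. p k) \<le> real j"
        using psubset.prems(1)[OF i] psubset.prems(2) i psubset.hyps(1) by (simp add: sum_diff1)
      then have "?D (I - {i}) (Suc j) \<le> ?D (I - {i}) j"
        using psubset i by (intro psubset.IH) auto
      then show ?thesis
        using poisson_binomial_Suc_le_max[OF psubset.hyps(1) i, of p j] psubset.prems(1)[OF i] by simp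
    qed
    have "(real (card I) - real j) * ?D I (Suc j)
        \<le> (real (card I) - (\<Sum>i\<in>I. p i)) * ?D I (Suc j)"
      using psubset.prems by (intro mult_right_mono poisson_binomial_nonneg) auto
    also have "\<dots> = (\<Sum>i\<in>I. (1 - p i) * ?D I (Suc j))"
      by (simp add: sum_subtractf flip: sum_distrib_right)
    also have "\<dots> \<le> (\<Sum>i\<in>I. (1 - p i) * ?D (I - {i}) j)"
      using psubset.prems(1) remove_le by (intro sum_mono mult_left_mono) auto
    also have "\<dots> = (real (card I) - real j) * ?D I j"
      by (rule poisson_binomial_failure_identity[OF psubset.hyps(1)])
    finally have "(real (card I) - real j) * ?D I (Suc j)
        \<le> (real (card I) - real j) * ?D I j" .
    then show ?thesis
      using True by simp
  qed
qed

theorem poisson_binomial_mode_at_mean: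
  assumes "finite I" "\<And>i. i \<in> I \<Longrightarrow> 0 \<le> p i \<and> p i \<le> 1" "(\<Sum>i\<in>I. p i) = real k"
  shows "poisson_binomial p I j \<le> poisson_binomial p I k"
proof (cases "j \<le> k")
  case True
  show ?thesis
  proof (rule lift_Suc_mono_le_ivl[where f = "poisson_binomial p I" and N = "{..<k}"])
    show "poisson_binomial p I n \<le> poisson_binomial p I (Suc n)" if "n \<in> {..<k}" for n
      using assms that by (intro poisson_binomial_mono_below_mean) auto
  qed (use True in auto)
next
  case False
  show ?thesis
  proof (rule lift_Suc_antimono_le_ivl[where f = "poisson_binomial p I" and N = "{k..}"])
    show "poisson_binomial p I (Suc n) \<le> poisson_binomial p I n" if "n \<in> {k..}" for n
      using assms that by (intro poisson_binomial_antimono_above_mean) auto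
  qed (use False in auto)
qed

lemma poisson_binomial_const:
  assumes "finite J" "\<And>i. i \<in> J \<Longrightarrow> p i = c"
  shows "poisson_binomial p J m = real (card J choose m) * c ^ m * (1 - c) ^ (card J - m)"
proof -
  have "poisson_binomial p J m
      = (\<Sum>S | S \<subseteq> J \<and> card S = m. c ^ m * (1 - c) ^ (card J - m))"
    unfolding poisson_binomial_eq_subset_sum[OF assms(1)]
  proof (intro sum.cong refl)
    fix S assume "S \<in> {S. S \<subseteq> J \<and> card S = m}"
    then have S: "S \<subseteq> J" "card S = m" "finite S"
      using assms(1) finite_subset by auto
    then show "(\<Prod>i\<in>S. p i) * (\<Prod>i\<in>J - S. 1 - p i) = c ^ m * (1 - c) ^ (card J - m)"
      using assms by (simp add: subset_iff card_Diff_subset)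
  qed
  then show ?thesis
    using n_subsets[OF assms(1), of m] by simp
qed

definition poisson_prob :: "real \<Rightarrow> nat \<Rightarrow> real" where
  "poisson_prob lam l = lam ^ l / fact l * exp (- lam)"

lemma f_trunc_eq_convolution:
  "f_trunc n k lam p = (\<Sum>m\<le>k. poisson_binomial p {..<n} m * poisson_prob lam (k - m))"
proof -
  let ?A = "{S. S \<subseteq> {..<n} \<and> card S \<le> k}"
  let ?h = "\<lambda>S. (\<Prod>i\<in>S. p i) * (\<Prod>i\<in>{..<n} - S. 1 - p i)
                  * poisson_prob lam (k - card S)"
  have "f_trunc n k lam p = sum ?h ?A"
    unfolding f_trunc_def poisson_prob_def by (simp add: mult.assoc)
  also have "\<dots> = (\<Sum>m\<le>k. sum ?h {S \<in> ?A. card S = m})"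
    by (rule sum.group[symmetric]) auto
  also have "\<dots> = (\<Sum>m\<le>k. poisson_binomial p {..<n} m * poisson_prob lam (k - m))"
  proof (intro sum.cong refl)
    fix m assume "m \<in> {..k}"
    then have "{S \<in> ?A. card S = m} = {S. S \<subseteq> {..<n} \<and> card S = m}"
      by auto
    then show "sum ?h {S \<in> ?A. card S = m}
        = poisson_binomial p {..<n} m * poisson_prob lam (k - m)"
      by (simp add: poisson_binomial_eq_subset_sum sum_distrib_right)
  qed
  finally show ?thesis .
qed

lemma poisson_binomial_insert_diff_le:
  assumes "finite I" "a \<notin> I" "\<And>i. i \<in> insert a I \<Longrightarrow> 0 \<le> p i \<and> p i \<le> 1"
  shows "\<bar>poisson_binomial p (insert a I) m - poisson_binomial p I m\<bar> \<le> p a"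
proof -
  have D: "0 \<le> poisson_binomial p I j" "poisson_binomial p I j \<le> 1" for j
    using assms poisson_binomial_nonneg[of I p j] poisson_binomial_le_1[of I p j] by auto
  have pa: "0 \<le> p a" "p a \<le> 1"
    using assms(3) by auto
  show ?thesis
  proof (cases m)
    case 0
    then show ?thesis
      using D[of 0] pa
      by (simp add: poisson_binomial_insert_0 assms(1,2) abs_mult algebra_simps mult_left_le)
  next
    case (Suc j)
    have "\<bar>p a * (poisson_binomial p I j - poisson_binomial p I (Suc j))\<bar> \<le> p a * 1"
      using D[of j] D[of "Suc j"] pa unfolding abs_mult by (intro mult_mono) auto
    then show ?thesis
      using Suc by (simp add: poisson_binomial_insert_Suc assms(1,2) algebra_simps)
  qed
qed

lemma convergent_of_summable_norm_diff:
  fixes x :: "nat \<Rightarrow> 'a::banach"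
  assumes "summable (\<lambda>n. norm (x (Suc n) - x n))"
  shows "convergent x"
proof -
  have "convergent (\<lambda>n. x 0 + (\<Sum>i<n. x (Suc i) - x i))"
    using summable_norm_cancel[OF assms]
    by (simp add: summable_iff_convergent convergent_add_const_iff)
  then show ?thesis
    by (simp add: sum_lessThan_telescope)
qed

definition poisson_binomial_infinite :: "(nat \<Rightarrow> real) \<Rightarrow> nat \<Rightarrow> real" where
  "poisson_binomial_infinite p m = lim (\<lambda>n. poisson_binomial p {..<n} m)"

lemma poisson_binomial_lessThan_tendsto:
  assumes "\<And>i. 0 \<le> p i \<and> p i \<le> 1" "summable p"
  shows "(\<lambda>n. poisson_binomial p {..<n} m) \<longlonglongrightarrow> poisson_binomial_infinite p m"
proof -
  have "\<bar>poisson_binomial p (insert n {..<n}) m - poisson_binomial p {..<n} m\<bar> \<le> p n" for n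
    using assms(1) by (intro poisson_binomial_insert_diff_le) auto
  then have "summable (\<lambda>n. norm (poisson_binomial p {..<Suc n} m - poisson_binomial p {..<n} m))"
    by (intro summable_comparison_test[OF _ assms(2)]) (simp add: lessThan_Suc)
  then show ?thesis
    unfolding poisson_binomial_infinite_def
    by (rule convergent_of_summable_norm_diff[THEN convergent_LIMSEQ_iff[THEN iffD1]])
qed

lemma choose_mult_power_eq:
  assumes "l \<le> n" "0 < n"
  shows "real (n choose l) * (x / real n) ^ l = x ^ l / fact l * (\<Prod>i<l. 1 - real i / real n)"
proof -
  have "real (n choose l) = (\<Prod>i<l. real n - real i) / fact l"
    using assms(1) by (simp add: binomial_altdef_of_nat prod_dividef fact_prod_rev of_nat_diff
        atLeast0LessThan flip: prod.lessThan_Suc)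
  moreover have "(\<Prod>i<l. 1 - real i / real n) = (\<Prod>i<l. (real n - real i) / real n)"
    using assms(2) by (intro prod.cong) (auto simp: field_simps)
  ultimately show ?thesis
    by (simp add: power_divide prod_dividef)
qed

lemma binomial_tendsto_poisson:
  "(\<lambda>n. real (n choose l) * (lam / real n) ^ l * (1 - lam / real n) ^ (n - l))
     \<longlonglongrightarrow> poisson_prob lam l"
proof -
  define g where "g n = lam ^ l / fact l * (\<Prod>i<l. 1 - real i / real n)
                        * ((1 + (- lam) / real n) ^ n / (1 - lam / real n) ^ l)" for n
  have "g \<longlonglongrightarrow> lam ^ l / fact l * (\<Prod>i<l. 1 - 0) * (exp (- lam) / (1 - 0) ^ l)"
    unfolding g_def by (intro tendsto_intros tendsto_exp_limit_sequentially) auto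
  moreover have "eventually (\<lambda>n. g n
      = real (n choose l) * (lam / real n) ^ l * (1 - lam / real n) ^ (n - l)) sequentially"
  proof (rule eventually_sequentiallyI[of "l + nat \<lceil>\<bar>lam\<bar>\<rceil> + 1"])
    fix n assume n: "l + nat \<lceil>\<bar>lam\<bar>\<rceil> + 1 \<le> n"
    then have "1 - lam / real n \<noteq> 0"
      by (auto simp: field_simps split: if_splits)
    then have "(1 - lam / real n) ^ (n - l) = (1 + (- lam) / real n) ^ n / (1 - lam / real n) ^ l"
      using n by (simp add: power_diff)
    then show "g n = real (n choose l) * (lam / real n) ^ l * (1 - lam / real n) ^ (n - l)"
      using n by (simp add: g_def choose_mult_power_eq)
  qed
  ultimately show ?thesis
    by (simp add: poisson_prob_def tendsto_cong)
qed

lemma f_eq_convolution: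
  assumes "(lam, p) \<in> nabla"
  shows "f k lam p = (\<Sum>m\<le>k. poisson_binomial_infinite p m * poisson_prob lam (k - m))"
proof -
  have "(\<lambda>n. f_trunc n k lam p)
      \<longlonglongrightarrow> (\<Sum>m\<le>k. poisson_binomial_infinite p m * poisson_prob lam (k - m))"
    unfolding f_trunc_eq_convolution
    using assms by (intro tendsto_intros poisson_binomial_lessThan_tendsto) (auto simp: nabla_def)
  then show ?thesis
    unfolding f_def by (rule limI)
qed

(* Indices below n keep p, index n carries the tail sum_(i >= n) p_i, and the n indices
   n + 1, ..., 2n carry lam/n, so that their sum is Binomial(n, lam/n), close to Poisson(lam). *)
definition bernoulli_approx :: "real \<Rightarrow> (nat \<Rightarrow> real) \<Rightarrow> nat \<Rightarrow> nat \<Rightarrow> real" where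
  "bernoulli_approx lam p n i =
     (if i < n then p i else if i = n then (\<Sum>i. p i) - (\<Sum>i<n. p i) else lam / real n)"

lemma sum_bernoulli_approx:
  assumes "0 < n"
  shows "(\<Sum>i<Suc n + n. bernoulli_approx lam p n i) = lam + (\<Sum>i. p i)"
proof -
  have "(\<Sum>i<Suc n + n. bernoulli_approx lam p n i)
      = (\<Sum>i<n. bernoulli_approx lam p n i) + bernoulli_approx lam p n n
        + (\<Sum>i\<in>{Suc n..<Suc n + n}. bernoulli_approx lam p n i)"
    using sum.atLeastLessThan_concat[of 0 "Suc n" "Suc n + n" "bernoulli_approx lam p n"]
    by (simp add: atLeast0LessThan)
  also have "\<dots> = (\<Sum>i<n. p i) + ((\<Sum>i. p i) - (\<Sum>i<n. p i)) + lam"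
    using assms by (simp add: bernoulli_approx_def)
  finally show ?thesis
    by simp
qed

lemma suminf_minus_partial_sums_tendsto_0:
  fixes f :: "nat \<Rightarrow> 'a::real_normed_vector"
  assumes "summable f"
  shows "(\<lambda>n. (\<Sum>i. f i) - (\<Sum>i<n. f i)) \<longlonglongrightarrow> 0"
  using tendsto_diff[OF tendsto_const[of "\<Sum>i. f i"] summable_LIMSEQ[OF assms]] by simp

lemma eventually_bernoulli_approx_prob:
  assumes "(lam, p) \<in> nabla"
  shows "eventually (\<lambda>n. \<forall>i. 0 \<le> bernoulli_approx lam p n i \<and> bernoulli_approx lam p n i \<le> 1)
           sequentially"
proof -
  have p: "\<And>i. 0 \<le> p i \<and> p i \<le> 1" "summable p" "0 \<le> lam"
    using assms by (auto simp: nabla_def)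
  have "eventually (\<lambda>n. (\<Sum>i. p i) - (\<Sum>i<n. p i) < 1) sequentially"
    by (rule order_tendstoD(2)[OF suminf_minus_partial_sums_tendsto_0[OF p(2)]]) simp
  moreover have "eventually (\<lambda>n. lam / real n \<le> 1) sequentially"
    using p(3) by real_asymp
  ultimately show ?thesis
    by eventually_elim
      (use p sum_le_suminf[OF p(2), of "{..<_}"] in \<open>auto simp: bernoulli_approx_def\<close>)
qed

lemma tendsto_poisson_binomial_bernoulli_approx_head:
  assumes "(lam, p) \<in> nabla"
  shows "(\<lambda>n. poisson_binomial (bernoulli_approx lam p n) {..<Suc n} m)
           \<longlonglongrightarrow> poisson_binomial_infinite p m"
proof -
  let ?q = "bernoulli_approx lam p"
  have p: "\<And>i. 0 \<le> p i \<and> p i \<le> 1" "summable p"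
    using assms by (auto simp: nabla_def)
  have head: "poisson_binomial (?q n) {..<n} m = poisson_binomial p {..<n} m" for n
    by (rule poisson_binomial_cong) (simp add: bernoulli_approx_def)
  have "eventually (\<lambda>n. norm (poisson_binomial (?q n) {..<Suc n} m - poisson_binomial p {..<n} m)
      \<le> (\<Sum>i. p i) - (\<Sum>i<n. p i)) sequentially"
    using eventually_bernoulli_approx_prob[OF assms]
  proof eventually_elim
    case (elim n)
    then have "\<bar>poisson_binomial (?q n) (insert n {..<n}) m - poisson_binomial (?q n) {..<n} m\<bar>
        \<le> ?q n n"
      by (intro poisson_binomial_insert_diff_le) auto
    then show ?case
      by (simp add: lessThan_Suc head bernoulli_approx_def)
  qed
  moreover have "(\<lambda>n. (\<Sum>i. p i) - (\<Sum>i<n. p i)) \<longlonglongrightarrow> 0"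
    by (rule suminf_minus_partial_sums_tendsto_0[OF p(2)])
  ultimately have "(\<lambda>n. poisson_binomial (?q n) {..<Suc n} m - poisson_binomial p {..<n} m)
      \<longlonglongrightarrow> 0"
    by (rule Lim_null_comparison)
  moreover have "(\<lambda>n. poisson_binomial p {..<n} m) \<longlonglongrightarrow> poisson_binomial_infinite p m"
    by (rule poisson_binomial_lessThan_tendsto[OF p])
  ultimately show ?thesis
    using tendsto_add by fastforce
qed

lemma tendsto_poisson_binomial_bernoulli_approx:
  assumes "(lam, p) \<in> nabla"
  shows "(\<lambda>n. poisson_binomial (bernoulli_approx lam p n) {..<Suc n + n} j) \<longlonglongrightarrow> f j lam p"
proof -
  let ?q = "bernoulli_approx lam p"
  have "poisson_binomial (?q n) {..<Suc n + n} j
      = (\<Sum>m\<le>j. poisson_binomial (?q n) {..<Suc n} m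
                  * poisson_binomial (?q n) {Suc n..<Suc n + n} (j - m))" for n
  proof -
    have "{..<Suc n + n} = {..<Suc n} \<union> {Suc n..<Suc n + n}"
      by auto
    then show ?thesis
      by (metis poisson_binomial_union finite_lessThan finite_atLeastLessThan ivl_disj_int_one(2))
  qed
  moreover have "poisson_binomial (?q n) {Suc n..<Suc n + n} l
      = real (n choose l) * (lam / real n) ^ l * (1 - lam / real n) ^ (n - l)" for n l
    by (subst poisson_binomial_const[where c = "lam / real n"]) (auto simp: bernoulli_approx_def)
  moreover have "(\<lambda>n. \<Sum>m\<le>j. poisson_binomial (?q n) {..<Suc n} m
                  * (real (n choose (j - m)) * (lam / real n) ^ (j - m)
                     * (1 - lam / real n) ^ (n - (j - m))))
      \<longlonglongrightarrow> f j lam p"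
    unfolding f_eq_convolution[OF assms]
    by (intro tendsto_sum tendsto_mult binomial_tendsto_poisson
        tendsto_poisson_binomial_bernoulli_approx_head assms)
  ultimately show ?thesis
    by simp
qed

theorem f_mode_at_mean:
  assumes "(lam, p) \<in> nabla" "lam + (\<Sum>i. p i) = real k"
  shows "f j lam p \<le> f k lam p"
proof (rule tendsto_le[OF _ tendsto_poisson_binomial_bernoulli_approx
                           tendsto_poisson_binomial_bernoulli_approx])
  show "eventually (\<lambda>n. poisson_binomial (bernoulli_approx lam p n) {..<Suc n + n} j
                      \<le> poisson_binomial (bernoulli_approx lam p n) {..<Suc n + n} k) sequentially"
    using eventually_bernoulli_approx_prob[OF assms(1)] eventually_gt_at_top[of 0]
  proof eventually_elim
    case (elim n)
    then show ?case
      using assms(2) sum_bernoulli_approx[of n lam p] by (intro poisson_binomial_mode_at_mean) auto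
  qed
qed (use assms in simp_all)

theorem proposition2:
  fixes P :: "(real \<times> (nat \<Rightarrow> real)) set"
  assumes "P \<subseteq> nabla"
    and "\<And>k. \<exists>\<theta>. is_maximiser P k \<theta>"
    and "\<And>k \<theta>. is_maximiser P k \<theta> \<Longrightarrow> \<theta> \<in> M k"
  shows "cross_modal P"
  unfolding cross_modal_def
proof (intro allI conjI impI)
  fix k \<theta>
  show "\<exists>\<theta>. is_maximiser P k \<theta>"
    by (rule assms(2))
  assume "is_maximiser P k \<theta>"
  then have "\<theta> \<in> M k"
    by (rule assms(3))
  then show "is_mode k (fst \<theta>) (snd \<theta>)"
    unfolding is_mode_def M_def using f_mode_at_mean by (cases \<theta>) auto
qed

end
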